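(* Let $j^1,j^2$ be twice differentiable functions of $(\rho_1,\rho_2)$ near a point, and at that point write $j^\alpha_\beta=\partial j^\alpha/\partial\rho_\beta$, $j^\alpha_{\beta\gamma}=\partial^2 j^\alpha/\partial\rho_\beta\partial\rho_\gamma$. Assume $j^1_2\,j^2_1\neq0$ and $\Delta^2:=(j^1_1-j^2_2)^2+4j^1_2j^2_1>0$, $\Delta>0$. Let $\mathbf{R}$ be any invertible $2\times2$ matrix with $\mathbf{R}\mathbf{J}\mathbf{R}^{-1}=\mathrm{diag}(v_+,v_-)$, $v_\pm=\tfrac12(j^1_1+j^2_2\pm\Delta)$, and let $\mathbf{G}^1,\mathbf{G}^2$ be the associated mode coupling matrices. Then: (a) $G^1_{11}=G^2_{22}=0$ if and only if $$j^2_1(2j^1_{12}+j^2_{22})+j^1_2j^2_{11}-j^1_{11}(j^2_2-j^1_1)=0\quad\text{and}\quad j^1_2(2j^2_{12}+j^1_{11})+j^2_1j^1_{22}+j^2_{22}(j^2_2-j^1_1)=0.$$ (b) Assume the two conditions in (a) hold, and set $P:=(j^2_1)^2j^1_{22}+j^1_2j^2_1j^1_{11}$ and $Q:=j^2_1j^2_{22}+j^1_2j^2_{11}$. Then - $G^1_{22}=0$ if and only if $P=\tfrac12(j^1_1-j^2_2-\Delta)\,Q$; - $G^2_{11}=0$ if and only if $P=\tfrac12(j^1_1-j^2_2+\Delta)\,Q$. Consequently: $G^1_{22}=G^2_{11}=0$ iff $j^2_1j^1_{22}+j^1_2j^1_{11}=0$ and $j^2_1j^2_{22}+j^1_2j^2_{11}=0$;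 $G^1_{22}=0\neq G^2_{11}$ iff $P=\tfrac12(j^1_1-j^2_2-\Delta)Q$ and $Q\neq0$; $G^1_{22}\neq0=G^2_{11}$ iff $P=\tfrac12(j^1_1-j^2_2+\Delta)Q$ and $Q\neq0$; and $G^1_{22}\neq0\neq G^2_{11}$ iff $P\neq\tfrac12(j^1_1-j^2_2\pm\Delta)Q$ for both signs.
   Context: $\mathbf{J}=\begin{pmatrix} j^1_1 & j^1_2\\ j^2_1 & j^2_2\end{pmatrix}$ is the current Jacobian, $\mathbf{H}^\lambda$ ($\lambda=1,2$) is the Hessian matrix with entries $H^\lambda_{\beta\gamma}=j^\lambda_{\beta\gamma}$. For an invertible diagonalizer $\mathbf{R}$ (its first row is a left eigenvector of $\mathbf{J}$ for $v_+$, its second row a left eigenvector for $v_-$), the mode coupling matrices are $\mathbf{G}^\alpha=\tfrac12\sum_{\lambda=1}^2R_{\alpha\lambda}(\mathbf{R}^{-1})^T\mathbf{H}^\lambda\mathbf{R}^{-1}$, $\alpha=1,2$, with entries $G^\alpha_{\beta\gamma}$; whether a given entry vanishes does not depend on the normalization of the rows of $\mathbf{R}$. (Interpretation in mode coupling theory, not needed for the claim: the case $G^1_{11}=G^2_{22}=0$ is the non-KPZ case; within it, $G^1_{22}=G^2_{11}=0$ corresponds to two diffusive modes, exactly one vanishing corresponds to one diffusive and one $z=3/2$ Lévy mode, and both nonzero to two golden-mean Lévy modes.) *)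

theory Defs
  imports "HOL-Analysis.Analysis"
begin

text \<open>2x2 real matrices are indexed by the two-element type 2, whose elements
  are 1 and 2 (first and second row/column).  The Jacobian J has entries
  J $ a $ b = j^a_b, and H l is the Hessian of j^l, H l $ b $ c = j^l_bc.\<close>

definition diag2 :: "real \<Rightarrow> real \<Rightarrow> real^2^2" where
  "diag2 a b = (\<chi> i j. if i = j then (if i = 1 then a else b) else 0)"

definition mode_coupling :: "real^2^2 \<Rightarrow> (2 \<Rightarrow> real^2^2) \<Rightarrow> 2 \<Rightarrow> real^2^2" where
  "mode_coupling R H a =
     (\<Sum>l\<in>UNIV. (R $ a $ l / 2) *\<^sub>R (transpose (matrix_inv R) ** H l ** matrix_inv R))"

end

theory Submission
  imports Defs
begin

text \<open>Write J = [[a, b], [c, d]] with b c \<noteq> 0. Every row of a diagonalizer R is a multiple of a left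
  eigenvector (c, v - a) and every column of R^-1 a multiple of a right eigenvector (b, v - a), where
  v is the corresponding eigenvalue. Hence the entry G^alpha_beta,beta vanishes iff the coupling
  sum_lambda l_lambda r^T H^lambda r of these eigenvectors l, r does, and that coupling only depends on
  the shifts u = v - a, which are the two roots p, m of t^2 = (d - a) t + b c. Reducing with this
  quadratic, the coupling for a single root u equals u (b A + u B), where A = 0 and B = 0 are the two
  conditions of (a); for the two distinct roots u, v its c-fold equals
  v (v - u) (P + u Q) + b c (v A - c B), which leaves only P + u Q once A = B = 0.\<close>

lemma matrix_inv_mult:
  fixes R :: "'a::semiring_1^'n^'m"
  assumes "invertible R"
  shows "R ** matrix_inv R = mat 1" "matrix_inv R ** R = mat 1"
  using someI_ex[OF assms[unfolded invertible_def]] unfolding matrix_inv_def by auto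

lemma diagonalizer_eigen_equations:
  fixes R J D :: "'a::comm_ring_1^'n^'n"
  assumes "invertible R" "R ** J ** matrix_inv R = D"
  shows "R ** J = D ** R" "J ** matrix_inv R = matrix_inv R ** D"
proof -
  note inv = matrix_inv_mult[OF assms(1)]
  have "R ** J = R ** J ** (matrix_inv R ** R)" by (simp add: inv matrix_mul_rid)
  also have "\<dots> = (R ** J ** matrix_inv R) ** R" by (simp only: matrix_mul_assoc)
  finally show "R ** J = D ** R" by (simp only: assms(2))
  have "J ** matrix_inv R = (matrix_inv R ** R) ** J ** matrix_inv R" by (simp add: inv matrix_mul_lid)
  also have "\<dots> = matrix_inv R ** (R ** J ** matrix_inv R)" by (simp only: matrix_mul_assoc)
  finally show "J ** matrix_inv R = matrix_inv R ** D" by (simp only: assms(2))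
qed

lemma diag2_mult_component:
  "(diag2 v1 v2 ** M) $ i $ j = diag2 v1 v2 $ i $ i * M $ i $ j"
  "(M ** diag2 v1 v2) $ i $ j = M $ i $ j * diag2 v1 v2 $ j $ j"
  using exhaust_2[of i] exhaust_2[of j]
  by (auto simp add: diag2_def matrix_matrix_mult_def sum_2)

lemma diagonalizer_rows_columns_2:
  fixes R J :: "real^2^2"
  assumes R: "invertible R" "R ** J ** matrix_inv R = diag2 v1 v2"
    and b: "J$1$2 \<noteq> 0" and c: "J$2$1 \<noteq> 0"
  shows "R$i$2 = (diag2 v1 v2 $i$i - J$1$1) / J$2$1 * R$i$1"
    "matrix_inv R $2$k = (diag2 v1 v2 $k$k - J$1$1) / J$1$2 * matrix_inv R $1$k"
    "R$i$1 \<noteq> 0" "matrix_inv R $1$k \<noteq> 0"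
proof -
  note eig = diagonalizer_eigen_equations[OF R]
  have "(R ** J) $ i $ 1 = (diag2 v1 v2 ** R) $ i $ 1" using eig(1) by simp
  then have "R$i$1 * J$1$1 + R$i$2 * J$2$1 = diag2 v1 v2 $i$i * R$i$1"
    unfolding diag2_mult_component by (simp add: matrix_matrix_mult_def sum_2)
  then show row: "R$i$2 = (diag2 v1 v2 $i$i - J$1$1) / J$2$1 * R$i$1"
    using c by (simp add: field_simps)
  have "(J ** matrix_inv R) $ 1 $ k = (matrix_inv R ** diag2 v1 v2) $ 1 $ k" using eig(2) by simp
  then have "J$1$1 * matrix_inv R$1$k + J$1$2 * matrix_inv R$2$k = matrix_inv R$1$k * diag2 v1 v2 $k$k"
    unfolding diag2_mult_component by (simp add: matrix_matrix_mult_def sum_2)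
  then show col: "matrix_inv R $2$k = (diag2 v1 v2 $k$k - J$1$1) / J$1$2 * matrix_inv R $1$k"
    using b by (simp add: field_simps)
  have "(R ** matrix_inv R) $ i $ j = (if i = j then 1 else 0)" for i j
    by (simp add: matrix_inv_mult[OF R(1)] mat_def)
  then have "R$i$1 * matrix_inv R$1$j + R$i$2 * matrix_inv R$2$j = (if i = j then 1 else 0)" for i j
    by (simp add: matrix_matrix_mult_def sum_2)
  from this[of i i] this[of k k] show "R$i$1 \<noteq> 0" "matrix_inv R $1$k \<noteq> 0"
    using row col by auto
qed

definition hessian_form :: "real^2^2 \<Rightarrow> real \<Rightarrow> real \<Rightarrow> real" where
  "hessian_form M x y = M$1$1 * x^2 + 2 * M$1$2 * x * y + M$2$2 * y^2"

definition eigen_coupling :: "(2 \<Rightarrow> real^2^2) \<Rightarrow> real \<Rightarrow> real \<Rightarrow> real \<Rightarrow> real \<Rightarrow> real" where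
  "eigen_coupling H l1 l2 r1 r2 = l1 * hessian_form (H 1) r1 r2 + l2 * hessian_form (H 2) r1 r2"

lemma mode_coupling_diag_component:
  assumes Hsym: "\<And>l. H l $ 1 $ 2 = H l $ 2 $ 1"
    and row: "R$i$1 = \<alpha> * l1" "R$i$2 = \<alpha> * l2"
    and col: "matrix_inv R $1$k = \<beta> * r1" "matrix_inv R $2$k = \<beta> * r2"
  shows "mode_coupling R H i $ k $ k = \<alpha> * \<beta>^2 / 2 * eigen_coupling H l1 l2 r1 r2"
  unfolding mode_coupling_def eigen_coupling_def hessian_form_def
  by (simp add: sum_component matrix_matrix_mult_def transpose_def sum_2 row col Hsym
      power2_eq_square algebra_simps)

lemma mode_coupling_diag_eq_0_iff:
  fixes R J :: "real^2^2"
  assumes Hsym: "\<And>l. H l $ 1 $ 2 = H l $ 2 $ 1"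
    and R: "invertible R" "R ** J ** matrix_inv R = diag2 v1 v2"
    and b: "J$1$2 \<noteq> 0" and c: "J$2$1 \<noteq> 0"
  shows "mode_coupling R H i $ k $ k = 0 \<longleftrightarrow>
    eigen_coupling H (J$2$1) (diag2 v1 v2 $i$i - J$1$1) (J$1$2) (diag2 v1 v2 $k$k - J$1$1) = 0"
proof -
  note eig = diagonalizer_rows_columns_2[OF R b c]
  have "mode_coupling R H i $ k $ k = R$i$1 / J$2$1 * (matrix_inv R $1$k / J$1$2)^2 / 2
      * eigen_coupling H (J$2$1) (diag2 v1 v2 $i$i - J$1$1) (J$1$2) (diag2 v1 v2 $k$k - J$1$1)"
    by (rule mode_coupling_diag_component[OF Hsym]) (use b c eig(1,2) in auto)
  then show ?thesis using b c eig(3)[of i] eig(4)[of k] by simp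
qed

lemma eigen_coupling_same_root:
  fixes a b c d u :: real
  assumes "u^2 = (d - a) * u + b * c"
  shows "eigen_coupling H c u b u =
    u * (b * (c * (2 * H 1$1$2 + H 2$2$2) + b * H 2$1$1 - H 1$1$1 * (d - a))
       + u * (b * (2 * H 2$1$2 + H 1$1$1) + c * H 1$2$2 + H 2$2$2 * (d - a)))"
  using assms unfolding eigen_coupling_def hessian_form_def by algebra

lemma eigen_coupling_distinct_roots:
  fixes a b c d u v :: real
  assumes "u * v = - b * c" "u + v = d - a"
  shows "c * eigen_coupling H c u b v =
    v * (v - u) * ((c^2 * H 1$2$2 + b * c * H 1$1$1) + u * (c * H 2$2$2 + b * H 2$1$1))
    + b * c * (v * (c * (2 * H 1$1$2 + H 2$2$2) + b * H 2$1$1 - H 1$1$1 * (d - a))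
       - c * (b * (2 * H 2$1$2 + H 1$1$1) + c * H 1$2$2 + H 2$2$2 * (d - a)))"
  using assms unfolding eigen_coupling_def hessian_form_def by algebra

lemma shifted_eigenvalues_2:
  fixes a b c d \<Delta> v1 v2 :: real
  assumes "\<Delta>^2 = (a - d)^2 + 4 * b * c"
    and "v1 = (a + d + \<Delta>) / 2" and "v2 = (a + d - \<Delta>) / 2"
  shows "(v1 - a)^2 = (d - a) * (v1 - a) + b * c" "(v2 - a)^2 = (d - a) * (v2 - a) + b * c"
    "(v1 - a) * (v2 - a) = - b * c" "(v1 - a) + (v2 - a) = d - a" "(v1 - a) - (v2 - a) = \<Delta>"
  using assms by (simp_all add: field_simps power2_eq_square) algebra+

lemma scaled_linear_pair_eq_0_iff:
  fixes b p m A B :: "'a::field"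
  assumes "b \<noteq> 0" "p \<noteq> 0" "m \<noteq> 0" "p \<noteq> m"
  shows "(p * (b * A + p * B) = 0 \<and> m * (b * A + m * B) = 0) \<longleftrightarrow> A = 0 \<and> B = 0"
proof
  assume "p * (b * A + p * B) = 0 \<and> m * (b * A + m * B) = 0"
  then have "b * A + p * B = 0" "b * A + m * B = 0" using assms by auto
  have "(p - m) * B = (b * A + p * B) - (b * A + m * B)" by (simp add: algebra_simps)
  also have "\<dots> = 0" using \<open>b * A + p * B = 0\<close> \<open>b * A + m * B = 0\<close> by simp
  finally have "(p - m) * B = 0" .
  then have "B = 0" using assms by simp
  then show "A = 0 \<and> B = 0" using \<open>b * A + m * B = 0\<close> assms by simp
qed simp

lemma vanishing_pattern_two_slopes:
  fixes P Q s1 s2 :: "'a::field"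
  assumes "x \<longleftrightarrow> P = s1 * Q" "y \<longleftrightarrow> P = s2 * Q" "s1 \<noteq> s2"
  shows "(x \<and> y \<longleftrightarrow> P = 0 \<and> Q = 0) \<and> (x \<and> \<not> y \<longleftrightarrow> P = s1 * Q \<and> Q \<noteq> 0)
    \<and> (\<not> x \<and> y \<longleftrightarrow> P = s2 * Q \<and> Q \<noteq> 0) \<and> (\<not> x \<and> \<not> y \<longleftrightarrow> P \<noteq> s1 * Q \<and> P \<noteq> s2 * Q)"
proof -
  have "P = s1 * Q \<and> P = s2 * Q \<longleftrightarrow> P = 0 \<and> Q = 0"
  proof
    assume PQ: "P = s1 * Q \<and> P = s2 * Q"
    have "(s1 - s2) * Q = s1 * Q - s2 * Q" by (simp add: algebra_simps)
    also have "\<dots> = 0" using PQ by (metis diff_self)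
    finally show "P = 0 \<and> Q = 0" using PQ assms(3) by simp
  qed simp
  then show ?thesis using assms(1,2) by auto
qed

locale diagonalized_current =
  fixes J R :: "real^2^2" and H :: "2 \<Rightarrow> real^2^2" and \<Delta> vp vm :: real
  assumes Hsym: "\<And>l i k. H l $ i $ k = H l $ k $ i"
    and offdiag: "J$1$2 * J$2$1 \<noteq> 0"
    and disc: "(J$1$1 - J$2$2)^2 + 4 * J$1$2 * J$2$1 > 0"
    and Delta_def: "\<Delta> = sqrt ((J$1$1 - J$2$2)^2 + 4 * J$1$2 * J$2$1)"
    and vp_def: "vp = (J$1$1 + J$2$2 + \<Delta>) / 2"
    and vm_def: "vm = (J$1$1 + J$2$2 - \<Delta>) / 2"
    and Rinv: "invertible R"
    and Rdiag: "R ** J ** matrix_inv R = diag2 vp vm"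
begin

abbreviation "a \<equiv> J$1$1"
abbreviation "b \<equiv> J$1$2"
abbreviation "c \<equiv> J$2$1"
abbreviation "d \<equiv> J$2$2"

definition shift :: "2 \<Rightarrow> real" where
  "shift i = diag2 vp vm $ i $ i - a"

abbreviation "p \<equiv> shift 1"
abbreviation "m \<equiv> shift 2"

lemma shift_simps: "p = vp - a" "m = vm - a"
  by (simp_all add: shift_def diag2_def)

definition "non_kpz_1 = c * (2 * H 1$1$2 + H 2$2$2) + b * H 2$1$1 - H 1$1$1 * (d - a)"
definition "non_kpz_2 = b * (2 * H 2$1$2 + H 1$1$1) + c * H 1$2$2 + H 2$2$2 * (d - a)"

definition "cross_P = c^2 * H 1$2$2 + b * c * H 1$1$1"
definition "cross_Q = c * H 2$2$2 + b * H 2$1$1"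

lemma b_nonzero: "b \<noteq> 0" and c_nonzero: "c \<noteq> 0"
  using offdiag by auto

lemma Delta_pos: "\<Delta> > 0"
  using disc Delta_def by simp

lemma shift_roots:
  "p^2 = (d - a) * p + b * c" "m^2 = (d - a) * m + b * c"
  "p * m = - b * c" "p + m = d - a" "p - m = \<Delta>"
proof -
  have "\<Delta>^2 = (a - d)^2 + 4 * b * c" using disc Delta_def by simp
  from shifted_eigenvalues_2[OF this vp_def vm_def] show
    "p^2 = (d - a) * p + b * c" "m^2 = (d - a) * m + b * c"
    "p * m = - b * c" "p + m = d - a" "p - m = \<Delta>"
    unfolding shift_simps .
qed

lemma shifts_nonzero_distinct: "p \<noteq> 0" "m \<noteq> 0" "p \<noteq> m"
  using shift_roots(3,5) offdiag Delta_pos by auto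

lemma mode_coupling_eq_0_iff:
  "mode_coupling R H i $ k $ k = 0 \<longleftrightarrow> eigen_coupling H c (shift i) b (shift k) = 0"
  unfolding shift_def using mode_coupling_diag_eq_0_iff[OF _ Rinv Rdiag b_nonzero c_nonzero] Hsym
  by blast

lemma self_couplings_vanish_iff:
  "mode_coupling R H 1 $ 1 $ 1 = 0 \<and> mode_coupling R H 2 $ 2 $ 2 = 0 \<longleftrightarrow>
    non_kpz_1 = 0 \<and> non_kpz_2 = 0"
  unfolding mode_coupling_eq_0_iff eigen_coupling_same_root[OF shift_roots(1)]
    eigen_coupling_same_root[OF shift_roots(2)] non_kpz_1_def non_kpz_2_def
  by (rule scaled_linear_pair_eq_0_iff[OF b_nonzero shifts_nonzero_distinct])

lemma cross_couplings_vanish_iff: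
  assumes "non_kpz_1 = 0" "non_kpz_2 = 0"
  shows "mode_coupling R H 1 $ 2 $ 2 = 0 \<longleftrightarrow> cross_P = (a - d - \<Delta>) / 2 * cross_Q"
    "mode_coupling R H 2 $ 1 $ 1 = 0 \<longleftrightarrow> cross_P = (a - d + \<Delta>) / 2 * cross_Q"
proof -
  note nz = c_nonzero shifts_nonzero_distinct
  have "c * eigen_coupling H c p b m = m * (m - p) * (cross_P + p * cross_Q)"
    using eigen_coupling_distinct_roots[OF shift_roots(3,4), where H = H] assms
    unfolding non_kpz_1_def non_kpz_2_def cross_P_def cross_Q_def by simp
  then have 12: "mode_coupling R H 1 $ 2 $ 2 = 0 \<longleftrightarrow> cross_P + p * cross_Q = 0"
    unfolding mode_coupling_eq_0_iff using nz by (metis mult_eq_0_iff right_minus_eq)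
  have "c * eigen_coupling H c m b p = p * (p - m) * (cross_P + m * cross_Q)"
    using eigen_coupling_distinct_roots[where u = m and v = p and H = H] shift_roots(3,4) assms
    unfolding non_kpz_1_def non_kpz_2_def cross_P_def cross_Q_def
    by (simp add: mult.commute add.commute)
  then have 21: "mode_coupling R H 2 $ 1 $ 1 = 0 \<longleftrightarrow> cross_P + m * cross_Q = 0"
    unfolding mode_coupling_eq_0_iff using nz by (metis mult_eq_0_iff right_minus_eq)
  have neg: "(a - d - \<Delta>) / 2 = - p" "(a - d + \<Delta>) / 2 = - m"
    unfolding shift_simps by (simp_all add: vp_def vm_def field_simps)
  show "mode_coupling R H 1 $ 2 $ 2 = 0 \<longleftrightarrow> cross_P = (a - d - \<Delta>) / 2 * cross_Q"
    "mode_coupling R H 2 $ 1 $ 1 = 0 \<longleftrightarrow> cross_P = (a - d + \<Delta>) / 2 * cross_Q"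
    unfolding neg mult_minus_left eq_neg_iff_add_eq_0 12 21 by simp_all
qed

lemma cross_P_cross_Q_eq_0_iff:
  "cross_P = 0 \<and> cross_Q = 0 \<longleftrightarrow> c * H 1$2$2 + b * H 1$1$1 = 0 \<and> cross_Q = 0"
proof -
  have "cross_P = c * (c * H 1$2$2 + b * H 1$1$1)"
    unfolding cross_P_def by (simp add: algebra_simps power2_eq_square)
  then show ?thesis using c_nonzero by simp
qed

end

theorem theorem3:
  fixes J R :: "real^2^2" and H :: "2 \<Rightarrow> real^2^2"
  assumes Hsym: "\<And>l b c. H l $ b $ c = H l $ c $ b"
    and offdiag: "J $ 1 $ 2 * J $ 2 $ 1 \<noteq> 0"
    and disc: "(J $ 1 $ 1 - J $ 2 $ 2)^2 + 4 * J $ 1 $ 2 * J $ 2 $ 1 > 0"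
    and Delta_def: "\<Delta> = sqrt ((J $ 1 $ 1 - J $ 2 $ 2)^2 + 4 * J $ 1 $ 2 * J $ 2 $ 1)"
    and vp_def: "vp = (J $ 1 $ 1 + J $ 2 $ 2 + \<Delta>) / 2"
    and vm_def: "vm = (J $ 1 $ 1 + J $ 2 $ 2 - \<Delta>) / 2"
    and Rinv: "invertible R"
    and Rdiag: "R ** J ** matrix_inv R = diag2 vp vm"
    and G_def: "G = mode_coupling R H"
    and P_def: "P = (J $ 2 $ 1)^2 * H 1 $ 2 $ 2 + J $ 1 $ 2 * J $ 2 $ 1 * H 1 $ 1 $ 1"
    and Q_def: "Q = J $ 2 $ 1 * H 2 $ 2 $ 2 + J $ 1 $ 2 * H 2 $ 1 $ 1"
  shows
   "((G 1 $ 1 $ 1 = 0 \<and> G 2 $ 2 $ 2 = 0) \<longleftrightarrow>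
       (J $ 2 $ 1 * (2 * H 1 $ 1 $ 2 + H 2 $ 2 $ 2) + J $ 1 $ 2 * H 2 $ 1 $ 1
          - H 1 $ 1 $ 1 * (J $ 2 $ 2 - J $ 1 $ 1) = 0 \<and>
        J $ 1 $ 2 * (2 * H 2 $ 1 $ 2 + H 1 $ 1 $ 1) + J $ 2 $ 1 * H 1 $ 2 $ 2
          + H 2 $ 2 $ 2 * (J $ 2 $ 2 - J $ 1 $ 1) = 0))
    \<and>
    ((J $ 2 $ 1 * (2 * H 1 $ 1 $ 2 + H 2 $ 2 $ 2) + J $ 1 $ 2 * H 2 $ 1 $ 1
          - H 1 $ 1 $ 1 * (J $ 2 $ 2 - J $ 1 $ 1) = 0 \<and>
      J $ 1 $ 2 * (2 * H 2 $ 1 $ 2 + H 1 $ 1 $ 1) + J $ 2 $ 1 * H 1 $ 2 $ 2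
          + H 2 $ 2 $ 2 * (J $ 2 $ 2 - J $ 1 $ 1) = 0)
     \<longrightarrow>
      (G 1 $ 2 $ 2 = 0 \<longleftrightarrow> P = (J $ 1 $ 1 - J $ 2 $ 2 - \<Delta>) / 2 * Q) \<and>
      (G 2 $ 1 $ 1 = 0 \<longleftrightarrow> P = (J $ 1 $ 1 - J $ 2 $ 2 + \<Delta>) / 2 * Q) \<and>
      ((G 1 $ 2 $ 2 = 0 \<and> G 2 $ 1 $ 1 = 0) \<longleftrightarrow>
         (J $ 2 $ 1 * H 1 $ 2 $ 2 + J $ 1 $ 2 * H 1 $ 1 $ 1 = 0 \<and>
          J $ 2 $ 1 * H 2 $ 2 $ 2 + J $ 1 $ 2 * H 2 $ 1 $ 1 = 0)) \<and>
      ((G 1 $ 2 $ 2 = 0 \<and> G 2 $ 1 $ 1 \<noteq> 0) \<longleftrightarrow>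
         (P = (J $ 1 $ 1 - J $ 2 $ 2 - \<Delta>) / 2 * Q \<and> Q \<noteq> 0)) \<and>
      ((G 1 $ 2 $ 2 \<noteq> 0 \<and> G 2 $ 1 $ 1 = 0) \<longleftrightarrow>
         (P = (J $ 1 $ 1 - J $ 2 $ 2 + \<Delta>) / 2 * Q \<and> Q \<noteq> 0)) \<and>
      ((G 1 $ 2 $ 2 \<noteq> 0 \<and> G 2 $ 1 $ 1 \<noteq> 0) \<longleftrightarrow>
         (P \<noteq> (J $ 1 $ 1 - J $ 2 $ 2 - \<Delta>) / 2 * Q \<and>
          P \<noteq> (J $ 1 $ 1 - J $ 2 $ 2 + \<Delta>) / 2 * Q)))"
proof -
  interpret diagonalized_current J R H \<Delta> vp vm
    using assms by unfold_locales auto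
  have "(a - d - \<Delta>) / 2 \<noteq> (a - d + \<Delta>) / 2"
    using Delta_pos by simp
  note pattern = vanishing_pattern_two_slopes[OF cross_couplings_vanish_iff this]
  show ?thesis
    unfolding G_def P_def Q_def cross_P_def[symmetric] cross_Q_def[symmetric]
      non_kpz_1_def[symmetric] non_kpz_2_def[symmetric]
    using self_couplings_vanish_iff cross_couplings_vanish_iff pattern cross_P_cross_Q_eq_0_iff
    by blast
qed

end
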